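(* Let $I=\{1,2\}$, $A=\{x,y\}$ with $x\ne y$, let $\mathcal C=\mathcal C(I,A,(\rho_i)_{i\in I},(C^a)_{a\in A})$ be a Cartan scheme with $\rho_1(x)=\rho_2(x)=y$ and $\rho_1(y)=\rho_2(y)=x$, and let $\mathcal R=\mathcal R(\mathcal C,(R^a)_{a\in A})$ be a root system of type $\mathcal C$. Then $\mathcal R$ is finite if and only if $\mathcal R$ is standard and $C^x=C^y$ is of finite type, that is, $c^x_{12}=c^x_{21}=0$ or $c^x_{12}c^x_{21}\in\{1,2,3\}$.
   Context: Let $\{\alpha_i\mid i\in I\}$ be the standard basis of $\mathbb Z^I$; $\mathbb N_0=\{0,1,2,\dots\}$. A generalized Cartan matrix is $C=(c_{ij})_{i,j\in I}\in\mathbb Z^{I\times I}$ with $c_{ii}=2$, $c_{jk}\le0$ for $j\ne k$, and $c_{ij}=0\Rightarrow c_{ji}=0$. A Cartan scheme $\mathcal C=\mathcal C(I,A,(\rho_i)_{i\in I},(C^a)_{a\in A})$ consists of a nonempty set $A$, maps $\rho_i:A\to A$ and generalized Cartan matrices $C^a=(c^a_{jk})_{j,k\in I}$ such that (C1) $\rho_i^2=\mathrm{id}$ and (C2) $c^a_{ij}=c^{\rho_i(a)}_{ij}$ for all $a\in A$, $i,j\in I$. It (and any root system of its type) is called standard if $C^a=C^b$ for all $a,b\in A$. For $i\in I$, $a\in A$ let $\sigma_i^a\in\mathrm{Aut}(\mathbb Z^I)$, $\sigma_i^a(\alpha_j)=\alpha_j-c^a_{ij}\alpha_i$. A root system of type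 $\mathcal C$ is a family $\mathcal R=\mathcal R(\mathcal C,(R^a)_{a\in A})$ of subsets $R^a\subset\mathbb Z^I$ such that, writing $R^a_+=R^a\cap\mathbb N_0^I$ and $m^a_{i,j}=|R^a\cap(\mathbb N_0\alpha_i+\mathbb N_0\alpha_j)|$, for all $a\in A$, $i,j\in I$: (R1) $R^a=R^a_+\cup(-R^a_+)$; (R2) $R^a\cap\mathbb Z\alpha_i=\{\alpha_i,-\alpha_i\}$; (R3) $\sigma_i^a(R^a)=R^{\rho_i(a)}$; (R4) if $i\neq j$ and $m^a_{i,j}$ is finite then $(\rho_i\rho_j)^{m^a_{i,j}}(a)=a$. It is finite if every $R^a$ is finite. *)

theory Defs
  imports Main
begin

text \<open>Elements of Z^I are modelled as functions 'i => int vanishing outside I.\<close>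

definition zvec :: "'i set \<Rightarrow> ('i \<Rightarrow> int) set" where
  "zvec I = {v. \<forall>j. j \<notin> I \<longrightarrow> v j = 0}"

definition alpha :: "'i \<Rightarrow> 'i \<Rightarrow> int" where
  "alpha i = (\<lambda>j. if j = i then 1 else 0)"

definition gen_cartan_matrix :: "'i set \<Rightarrow> ('i \<Rightarrow> 'i \<Rightarrow> int) \<Rightarrow> bool" where
  "gen_cartan_matrix I c \<longleftrightarrow>
     (\<forall>i\<in>I. c i i = 2) \<and>
     (\<forall>j\<in>I. \<forall>k\<in>I. j \<noteq> k \<longrightarrow> c j k \<le> 0) \<and>
     (\<forall>i\<in>I. \<forall>j\<in>I. c i j = 0 \<longrightarrow> c j i = 0)"

definition cartan_scheme ::
  "'i set \<Rightarrow> 'a set \<Rightarrow> ('i \<Rightarrow> 'a \<Rightarrow> 'a) \<Rightarrow> ('a \<Rightarrow> 'i \<Rightarrow> 'i \<Rightarrow> int) \<Rightarrow> bool" where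
  "cartan_scheme I A rho C \<longleftrightarrow>
     A \<noteq> {} \<and>
     (\<forall>i\<in>I. \<forall>a\<in>A. rho i a \<in> A) \<and>
     (\<forall>i\<in>I. \<forall>a\<in>A. rho i (rho i a) = a) \<and>
     (\<forall>a\<in>A. gen_cartan_matrix I (C a)) \<and>
     (\<forall>a\<in>A. \<forall>i\<in>I. \<forall>j\<in>I. C a i j = C (rho i a) i j)"

text \<open>sigma_i^a(v) = v - (sum_j c^a_ij v_j) alpha_i, the linear map with
  sigma_i^a(alpha_j) = alpha_j - c^a_ij alpha_i.\<close>
definition sigma ::
  "'i set \<Rightarrow> ('a \<Rightarrow> 'i \<Rightarrow> 'i \<Rightarrow> int) \<Rightarrow> 'a \<Rightarrow> 'i \<Rightarrow> ('i \<Rightarrow> int) \<Rightarrow> ('i \<Rightarrow> int)" where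
  "sigma I C a i v = (\<lambda>k. v k - (if k = i then (\<Sum>j\<in>I. C a i j * v j) else 0))"

definition pos_roots :: "'i set \<Rightarrow> ('i \<Rightarrow> int) set \<Rightarrow> ('i \<Rightarrow> int) set" where
  "pos_roots I S = S \<inter> {v \<in> zvec I. \<forall>j. 0 \<le> v j}"

definition root_system ::
  "'i set \<Rightarrow> 'a set \<Rightarrow> ('i \<Rightarrow> 'a \<Rightarrow> 'a) \<Rightarrow> ('a \<Rightarrow> 'i \<Rightarrow> 'i \<Rightarrow> int)
     \<Rightarrow> ('a \<Rightarrow> ('i \<Rightarrow> int) set) \<Rightarrow> bool" where
  "root_system I A rho C R \<longleftrightarrow>
     cartan_scheme I A rho C \<and>
     (\<forall>a\<in>A. R a \<subseteq> zvec I) \<and>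
     (\<forall>a\<in>A. R a = pos_roots I (R a) \<union> uminus ` pos_roots I (R a)) \<and>
     (\<forall>a\<in>A. \<forall>i\<in>I. R a \<inter> {(\<lambda>j. k * alpha i j) | k :: int. True} = {alpha i, - alpha i}) \<and>
     (\<forall>a\<in>A. \<forall>i\<in>I. sigma I C a i ` R a = R (rho i a)) \<and>
     (\<forall>a\<in>A. \<forall>i\<in>I. \<forall>j\<in>I. i \<noteq> j \<longrightarrow>
        (let S = R a \<inter> {(\<lambda>k. n * alpha i k + m * alpha j k) | n m :: int. 0 \<le> n \<and> 0 \<le> m}
         in finite S \<longrightarrow> ((rho i \<circ> rho j) ^^ card S) a = a))"

definition finite_root_system :: "'a set \<Rightarrow> ('a \<Rightarrow> ('i \<Rightarrow> int) set) \<Rightarrow> bool" where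
  "finite_root_system A R \<longleftrightarrow> (\<forall>a\<in>A. finite (R a))"

definition standard_scheme :: "'i set \<Rightarrow> 'a set \<Rightarrow> ('a \<Rightarrow> 'i \<Rightarrow> 'i \<Rightarrow> int) \<Rightarrow> bool" where
  "standard_scheme I A C \<longleftrightarrow> (\<forall>a\<in>A. \<forall>b\<in>A. \<forall>i\<in>I. \<forall>j\<in>I. C a i j = C b i j)"

end

theory Submission
  imports Defs
begin

text \<open>Both reflections swap the two objects, so C2 forces \<open>C\<^sup>x = C\<^sup>y\<close> and
  \<open>U = R\<^sup>x \<union> R\<^sup>y\<close> is a single set of vectors stable under the reflections \<open>s\<^sub>1, s\<^sub>2\<close>
  of the common Cartan matrix, consisting of positive and negative vectors whose only multiples of
  simple roots are \<open>\<plusminus>\<alpha>\<^sub>i\<close>. A positive root other than \<open>\<alpha>\<^sub>i\<close> stays positive under \<open>s\<^sub>i\<close>; hence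
  if a word \<open>w\<close> in \<open>s\<^sub>1, s\<^sub>2\<close> maps every positive vector to a negative one, every positive root
  lies in the finite inversion set of \<open>w\<close>. In finite type the longest element \<open>(s\<^sub>1s\<^sub>2)\<^sup>m\<^sup>/\<^sup>2\<close>
  acts as \<open>-id\<close> or \<open>-swap\<close>, so \<open>U\<close> is finite. Otherwise \<open>c\<^sub>1\<^sub>2c\<^sub>2\<^sub>1 \<ge> 4\<close>, and the orbit of
  \<open>\<alpha>\<^sub>1\<close> under \<open>s\<^sub>1s\<^sub>2\<close> consists of infinitely many distinct roots.\<close>

definition simple_refl :: "(nat \<Rightarrow> nat \<Rightarrow> int) \<Rightarrow> nat \<Rightarrow> (nat \<Rightarrow> int) \<Rightarrow> nat \<Rightarrow> int" where
  "simple_refl c i v = (\<lambda>k. v k - (if k = i then c i 1 * v 1 + c i 2 * v 2 else 0))"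

text \<open>The word is read from left to right: its first letter acts first.\<close>
fun refl_word :: "(nat \<Rightarrow> nat \<Rightarrow> int) \<Rightarrow> nat list \<Rightarrow> (nat \<Rightarrow> int) \<Rightarrow> nat \<Rightarrow> int" where
  "refl_word c [] v = v"
| "refl_word c (i # w) v = refl_word c w (simple_refl c i v)"

fun inversion_set :: "(nat \<Rightarrow> nat \<Rightarrow> int) \<Rightarrow> nat list \<Rightarrow> (nat \<Rightarrow> int) set" where
  "inversion_set c [] = {}"
| "inversion_set c (i # w) = insert (alpha i) (simple_refl c i ` inversion_set c w)"

lemma sigma_eq_simple_refl: "sigma {1, 2} C a i = simple_refl (C a) i"
  by (simp add: fun_eq_iff sigma_def simple_refl_def)

lemma simple_refl_cong: "c i 1 = d i 1 \<Longrightarrow> c i 2 = d i 2 \<Longrightarrow> simple_refl c i = simple_refl d i"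
  by (simp add: fun_eq_iff simple_refl_def)

lemma simple_refl_involutive:
  "i \<in> {1, 2} \<Longrightarrow> c i i = 2 \<Longrightarrow> simple_refl c i (simple_refl c i v) = v"
  by (auto simp: fun_eq_iff simple_refl_def algebra_simps)

lemma finite_inversion_set: "finite (inversion_set c w)"
  by (induction w) auto

lemma cartan_scheme_eq_if_all_rho_eq:
  assumes "cartan_scheme I A rho C" "x \<in> A" "\<And>i. i \<in> I \<Longrightarrow> rho i x = y"
    and "i \<in> I" "j \<in> I"
  shows "C y i j = C x i j"
  using assms unfolding cartan_scheme_def by metis

lemma finite_type_cases:
  fixes c :: "nat \<Rightarrow> nat \<Rightarrow> int"
  assumes "gen_cartan_matrix {1, 2} c"
    and "(c 1 2 = 0 \<and> c 2 1 = 0) \<or> c 1 2 * c 2 1 \<in> {1, 2, 3}"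
  shows "(c 1 2, c 2 1) \<in> {(0, 0), (-1, -1), (-1, -2), (-2, -1), (-1, -3), (-3, -1)}"
proof (cases "c 1 2 = 0 \<and> c 2 1 = 0")
  case False
  then have prod: "c 1 2 * c 2 1 \<in> {1, 2, 3}" using assms(2) by blast
  have neg: "c 1 2 < 0" "c 2 1 < 0"
    using assms(1) prod by (auto simp: gen_cartan_matrix_def le_less)
  have "- c 1 2 \<le> c 1 2 * c 2 1" "- c 2 1 \<le> c 1 2 * c 2 1"
    using mult_left_mono_neg[of "c 2 1" "-1" "c 1 2"] mult_right_mono_neg[of "c 1 2" "-1" "c 2 1"] neg
    by simp_all
  then have "c 1 2 \<in> {-1, -2, -3}" "c 2 1 \<in> {-1, -2, -3}" using prod neg by auto
  then show ?thesis using prod by auto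
qed simp

lemma not_finite_type_product_ge_4:
  fixes c :: "nat \<Rightarrow> nat \<Rightarrow> int"
  assumes "gen_cartan_matrix {1, 2} c"
    and "\<not> ((c 1 2 = 0 \<and> c 2 1 = 0) \<or> c 1 2 * c 2 1 \<in> {1, 2, 3})"
  shows "4 \<le> c 1 2 * c 2 1"
proof -
  have "c 1 2 < 0" "c 2 1 < 0"
    using assms unfolding gen_cartan_matrix_def by (auto simp: le_less)
  then have "0 < c 1 2 * c 2 1" by (simp add: mult_neg_neg)
  then show ?thesis using assms(2) by auto
qed

lemma finite_type_longest_word:
  assumes "gen_cartan_matrix {1, 2} c"
    and "(c 1 2 = 0 \<and> c 2 1 = 0) \<or> c 1 2 * c 2 1 \<in> {1, 2, 3}"
  obtains w where "set w \<subseteq> {1, 2}"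
    and "\<And>v. (refl_word c w v 1, refl_word c w v 2) \<in> {(- v 1, - v 2), (- v 2, - v 1)}"
proof -
  have diag: "c 1 1 = 2" "c 2 2 = 2" using assms(1) by (simp_all add: gen_cartan_matrix_def)
  with finite_type_cases[OF assms] consider
      "c 1 2 = 0" "c 2 1 = 0" | "c 1 2 = -1" "c 2 1 = -1"
    | "c 1 2 * c 2 1 = 2" "c 1 2 \<in> {-1, -2}" "c 2 1 \<in> {-1, -2}"
    | "c 1 2 * c 2 1 = 3" "c 1 2 \<in> {-1, -3}" "c 2 1 \<in> {-1, -3}"
    by auto
  then show thesis
  proof cases
    case 1
    with diag show thesis by (intro that[of "[1, 2]"]) (auto simp: simple_refl_def)
  next
    case 2
    with diag show thesis by (intro that[of "[1, 2, 1]"]) (auto simp: simple_refl_def)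
  next
    case 3
    with diag show thesis by (intro that[of "[1, 2, 1, 2]"]) (auto simp: simple_refl_def)
  next
    case 4
    with diag show thesis by (intro that[of "[1, 2, 1, 2, 1, 2]"]) (auto simp: simple_refl_def)
  qed
qed

text \<open>The only use of \<open>ab \<ge> 4\<close>: the cone \<open>p > 0, q \<ge> 0, 2q < bp\<close> is mapped into itself by
  \<open>s\<^sub>1s\<^sub>2\<close>, which there strictly increases the first coordinate.\<close>
lemma dihedral_cone_step:
  fixes a b p q :: int
  assumes "0 < a" "0 < b" "4 \<le> a * b" "0 < p" "0 \<le> q" "2 * q < b * p"
  shows "p < a * (b * p - q) - p" "0 \<le> b * p - q" "2 * (b * p - q) < b * (a * (b * p - q) - p)"
proof -
  define q' where "q' = b * p - q"
  have "a * (2 * q) < a * (b * p)" "4 * p \<le> (a * b) * p"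
    using assms by simp_all
  then have p_less: "2 * p < a * q'"
    by (simp add: q'_def algebra_simps)
  have q'_nonneg: "0 \<le> q'"
    using assms by (simp add: q'_def)
  have "b * (2 * p) < b * (a * q')" "4 * q' \<le> (a * b) * q'"
    using p_less assms(2) mult_right_mono[OF assms(3) q'_nonneg] by simp_all
  then have "2 * q' < b * (a * q' - p)"
    by (simp add: algebra_simps)
  then show "p < a * (b * p - q) - p" "0 \<le> b * p - q" "2 * (b * p - q) < b * (a * (b * p - q) - p)"
    using p_less assms by (simp_all add: q'_def)
qed

locale rank2_root_set =
  fixes c :: "nat \<Rightarrow> nat \<Rightarrow> int" and U :: "(nat \<Rightarrow> int) set"
  assumes cartan: "gen_cartan_matrix {1, 2} c"
    and refl_closed: "\<And>i v. i \<in> {1, 2} \<Longrightarrow> v \<in> U \<Longrightarrow> simple_refl c i v \<in> U"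
    and uminus_closed: "\<And>v. v \<in> U \<Longrightarrow> - v \<in> U"
    and support: "\<And>v. v \<in> U \<Longrightarrow> v \<in> zvec {1, 2}"
    and sign: "\<And>v. v \<in> U \<Longrightarrow> (\<forall>j. 0 \<le> v j) \<or> (\<forall>j. v j \<le> 0)"
    and multiples: "\<And>i k. i \<in> {1, 2} \<Longrightarrow> (\<lambda>j. k * alpha i j) \<in> U \<Longrightarrow>
      (\<lambda>j. k * alpha i j) \<in> {alpha i, - alpha i}"
    and simple_root: "alpha 1 \<in> U"
begin

lemma cartan_diag: "i \<in> {1, 2} \<Longrightarrow> c i i = 2"
  using cartan by (auto simp: gen_cartan_matrix_def)

lemma root_eq_multiple:
  assumes "v \<in> U" "i \<in> {1, 2}" "j \<in> {1, 2}" "j \<noteq> i" "v j = 0"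
  shows "v = (\<lambda>k. v i * alpha i k)"
proof
  fix k
  show "v k = v i * alpha i k"
    using support[OF assms(1)] assms(2-5)
    by (cases "k = i"; cases "k = j") (auto simp: zvec_def alpha_def)
qed

lemma root_nonzero:
  assumes "v \<in> U" "v 1 = 0" "v 2 = 0"
  shows False
proof -
  have "(\<lambda>j. 0 * alpha (1::nat) j) \<in> U"
    using root_eq_multiple[of v 1 2] assms by simp
  then have "(\<lambda>j. 0 * alpha (1::nat) j) \<in> {alpha 1, - alpha 1}"
    by (intro multiples) simp_all
  then show False by (auto simp: alpha_def dest: fun_cong[where x = 1])
qed

lemma simple_refl_positive:
  assumes i: "i \<in> {1, 2}" and v: "v \<in> U" "\<forall>j. 0 \<le> v j" "v \<noteq> alpha i"
  shows "\<forall>j. 0 \<le> simple_refl c i v j"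
proof -
  define j where "j = (3::nat) - i"
  have j: "j \<in> {1, 2}" "j \<noteq> i" "simple_refl c i v j = v j"
    using i by (auto simp: j_def simple_refl_def)
  have "v j \<noteq> 0"
  proof
    assume "v j = 0"
    with root_eq_multiple[OF v(1) i j(1,2)] multiples[OF i, of "v i"] v
    have "v i = -1" by (auto simp: alpha_def)
    with v(2) show False by (metis neg_0_le_iff_le not_one_le_zero)
  qed
  moreover have "0 \<le> v j" using v(2) by blast
  ultimately have "0 < simple_refl c i v j" using j(3) by simp
  then show ?thesis using sign[OF refl_closed[OF i v(1)]] by (meson not_le)
qed

text \<open>A positive root that some prefix of \<open>w\<close> turns negative must be sent to a simple root
  \<open>\<alpha>\<^sub>i\<close> by the part of the prefix before its letter \<open>i\<close>; such roots form the inversion set.\<close>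
lemma positive_root_inversion_or_positive:
  "set w \<subseteq> {1, 2} \<Longrightarrow> v \<in> U \<Longrightarrow> \<forall>j. 0 \<le> v j \<Longrightarrow>
    v \<in> inversion_set c w \<or> (\<forall>j. 0 \<le> refl_word c w v j)"
proof (induction w arbitrary: v)
  case (Cons i w)
  then have i: "i \<in> {1, 2}" by simp
  show ?case
  proof (cases "v = alpha i")
    case False
    with Cons.prems i have "simple_refl c i v \<in> U" "\<forall>j. 0 \<le> simple_refl c i v j"
      by (simp_all add: refl_closed simple_refl_positive)
    with Cons.IH Cons.prems(1)
    have "simple_refl c i v \<in> inversion_set c w \<or> (\<forall>j. 0 \<le> refl_word c w (simple_refl c i v) j)"
      by simp
    then show ?thesis
      using simple_refl_involutive[of i c v, OF i cartan_diag[OF i]] by (auto intro: rev_image_eqI)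
  qed simp
qed simp

lemma finite_if_longest_word:
  assumes w: "set w \<subseteq> {1, 2}"
    and negates: "\<And>v. (refl_word c w v 1, refl_word c w v 2) \<in> {(- v 1, - v 2), (- v 2, - v 1)}"
  shows "finite U"
proof -
  have positive: "v \<in> inversion_set c w" if v: "v \<in> U" "\<forall>j. 0 \<le> v j" for v
  proof -
    have "\<not> (\<forall>j. 0 \<le> refl_word c w v j)"
    proof
      assume "\<forall>j. 0 \<le> refl_word c w v j"
      then have "0 \<le> refl_word c w v 1" "0 \<le> refl_word c w v 2" by blast+
      moreover have "0 \<le> v 1" "0 \<le> v 2" using v(2) by blast+
      ultimately have "v 1 = 0" "v 2 = 0" using negates[of v] by auto
      with v(1) show False by (rule root_nonzero)
    qed
    then show ?thesis using positive_root_inversion_or_positive[OF w v] by blast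
  qed
  have "U \<subseteq> inversion_set c w \<union> uminus ` inversion_set c w"
  proof
    fix v assume v: "v \<in> U"
    from sign[OF v] show "v \<in> inversion_set c w \<union> uminus ` inversion_set c w"
    proof
      assume "\<forall>j. v j \<le> 0"
      then have "- v \<in> inversion_set c w"
        using positive uminus_closed[OF v] by simp
      moreover have "v = - (- v)" by (simp add: fun_eq_iff)
      ultimately show ?thesis by blast
    qed (use positive v in blast)
  qed
  then show ?thesis
    using finite_inversion_set by (meson finite_UnI finite_imageI finite_subset)
qed

lemma infinite_if_product_ge_4:
  assumes "4 \<le> c 1 2 * c 2 1"
  shows "infinite U"
proof
  assume "finite U"
  define a b where "a = - c 1 2" and "b = - c 2 1"
  have "c 1 2 \<le> 0" "c 2 1 \<le> 0" using cartan by (simp_all add: gen_cartan_matrix_def)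
  with assms have ab: "0 < a" "0 < b" "4 \<le> a * b"
    by (auto simp: a_def b_def le_less)
  define root where "root n = ((simple_refl c 1 \<circ> simple_refl c 2) ^^ n) (alpha 1)" for n
  have root_Suc: "root (Suc n) 1 = a * (b * root n 1 - root n 2) - root n 1"
      "root (Suc n) 2 = b * root n 1 - root n 2" for n
    using cartan_diag[of 1] cartan_diag[of 2]
    by (simp_all add: root_def simple_refl_def a_def b_def algebra_simps)
  have root_in: "root n \<in> U" for n
    by (induction n) (use simple_root in \<open>simp_all add: root_def refl_closed\<close>)
  have cone: "0 < root n 1 \<and> 0 \<le> root n 2 \<and> 2 * root n 2 < b * root n 1" for n
  proof (induction n)
    case 0
    then show ?case using ab by (simp add: root_def alpha_def)
  next
    case (Suc n)
    then show ?case
      unfolding root_Suc using dihedral_cone_step[OF ab] by (meson less_trans)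
  qed
  have "strict_mono (\<lambda>n. root n 1)"
    unfolding strict_mono_Suc_iff root_Suc using cone dihedral_cone_step(1)[OF ab] by blast
  then have "inj (\<lambda>n. root n 1)" by (rule strict_mono_imp_inj_on)
  then have "inj root" by (auto simp: inj_def)
  then have "infinite (range root)"
    using finite_imageD by blast
  moreover have "range root \<subseteq> U" using root_in by blast
  ultimately show False using \<open>finite U\<close> finite_subset by blast
qed

theorem finite_iff_finite_type:
  "finite U \<longleftrightarrow> (c 1 2 = 0 \<and> c 2 1 = 0) \<or> c 1 2 * c 2 1 \<in> {1, 2, 3}"
proof
  assume "(c 1 2 = 0 \<and> c 2 1 = 0) \<or> c 1 2 * c 2 1 \<in> {1, 2, 3}"
  then obtain w where "set w \<subseteq> {1, 2}"
    and "\<And>v. (refl_word c w v 1, refl_word c w v 2) \<in> {(- v 1, - v 2), (- v 2, - v 1)}"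
    using finite_type_longest_word[OF cartan] by blast
  then show "finite U" by (rule finite_if_longest_word)
qed (use infinite_if_product_ge_4 not_finite_type_product_ge_4[OF cartan] in blast)

end

lemma root_system_rank2_root_set:
  assumes rs: "root_system {1, 2} {x, y} rho C R"
    and swap: "\<And>i. i \<in> {1, 2} \<Longrightarrow> rho i x = y" "\<And>i. i \<in> {1, 2} \<Longrightarrow> rho i y = x"
  shows "rank2_root_set (C x) (R x \<union> R y)"
proof -
  have cs: "cartan_scheme {1, 2} {x, y} rho C"
    using rs by (simp add: root_system_def)
  have C_eq: "C a i j = C x i j" if "a \<in> {x, y}" "i \<in> {1, 2}" "j \<in> {1, 2}" for a i j
    using that cartan_scheme_eq_if_all_rho_eq[OF cs _ swap(1) that(2,3)] by auto
  have sigma: "sigma {1, 2} C a i = simple_refl (C x) i" if "a \<in> {x, y}" "i \<in> {1, 2}" for a i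
    unfolding sigma_eq_simple_refl by (intro simple_refl_cong C_eq[OF that]) simp_all
  have reflect_all: "\<forall>a\<in>{x, y}. \<forall>i\<in>{1, 2}. sigma {1, 2} C a i ` R a = R (rho i a)"
    using rs unfolding root_system_def by (elim conjE) assumption
  have signed_all: "\<forall>a\<in>{x, y}. R a = pos_roots {1, 2} (R a) \<union> uminus ` pos_roots {1, 2} (R a)"
    using rs unfolding root_system_def by (elim conjE) assumption
  have multiples_all: "\<forall>a\<in>{x, y}. \<forall>i\<in>{1, 2}.
      R a \<inter> {(\<lambda>j. k * alpha i j) | k :: int. True} = {alpha i, - alpha i}"
    using rs unfolding root_system_def by (elim conjE) assumption
  have reflect: "simple_refl (C x) i ` R a = R (rho i a)" if "a \<in> {x, y}" "i \<in> {1, 2}" for a i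
    using reflect_all that sigma[OF that] by metis
  have signed: "R a = pos_roots {1, 2} (R a) \<union> uminus ` pos_roots {1, 2} (R a)"
    and multiples: "R a \<inter> {(\<lambda>j. k * alpha i j) | k :: int. True} = {alpha i, - alpha i}"
    if "a \<in> {x, y}" "i \<in> {1, 2}" for a i
    using signed_all multiples_all that by blast+
  have uminus_closed: "- v \<in> R a" if "a \<in> {x, y}" "v \<in> R a" for a v
  proof -
    let ?P = "pos_roots {1, 2} (R a)"
    have "?P \<subseteq> R a" by (simp add: pos_roots_def)
    from that signed[OF that(1), of 1] consider "v \<in> ?P" | w where "w \<in> ?P" "v = - w"
      by blast
    then show ?thesis
    proof cases
      case 1
      then show ?thesis using signed[OF that(1), of 1] by blast
    next
      case 2
      moreover have "- (- w) = w" by (simp add: fun_eq_iff)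
      ultimately show ?thesis using \<open>?P \<subseteq> R a\<close> by auto
    qed
  qed
  show ?thesis
  proof
    show "gen_cartan_matrix {1, 2} (C x)"
      using cs by (simp add: cartan_scheme_def)
    show "simple_refl (C x) i v \<in> R x \<union> R y" if "i \<in> {1, 2}" "v \<in> R x \<union> R y" for i v
      using that reflect[of x i] reflect[of y i] swap by blast
    show "- v \<in> R x \<union> R y" if "v \<in> R x \<union> R y" for v
      using that uminus_closed by blast
    show "v \<in> zvec {1, 2}" if "v \<in> R x \<union> R y" for v
      using rs that by (auto simp: root_system_def)
    show "(\<forall>j. 0 \<le> v j) \<or> (\<forall>j. v j \<le> 0)" if "v \<in> R x \<union> R y" for v
      using that signed[of x 1] signed[of y 1] by (auto simp: pos_roots_def)
    show "(\<lambda>j. k * alpha i j) \<in> {alpha i, - alpha i}"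
      if "i \<in> {1, 2}" "(\<lambda>j. k * alpha i j) \<in> R x \<union> R y" for i k
      using that multiples[of x i] multiples[of y i] by blast
    show "alpha 1 \<in> R x \<union> R y"
      using multiples[of x 1] by blast
  qed
qed

theorem proposition5p2:
  fixes x y :: 'a
    and rho :: "nat \<Rightarrow> 'a \<Rightarrow> 'a"
    and C :: "'a \<Rightarrow> nat \<Rightarrow> nat \<Rightarrow> int"
    and R :: "'a \<Rightarrow> (nat \<Rightarrow> int) set"
  assumes "x \<noteq> y"
    and "cartan_scheme {1, 2} {x, y} rho C"
    and "rho 1 x = y" and "rho 2 x = y" and "rho 1 y = x" and "rho 2 y = x"
    and "root_system {1, 2} {x, y} rho C R"
  shows "finite_root_system {x, y} R \<longleftrightarrow>
           standard_scheme {1, 2} {x, y} C \<and>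
           ((C x 1 2 = 0 \<and> C x 2 1 = 0) \<or> C x 1 2 * C x 2 1 \<in> {1, 2, 3})"
proof -
  have rho_x: "\<And>i. i \<in> {1, 2} \<Longrightarrow> rho i x = y" and rho_y: "\<And>i. i \<in> {1, 2} \<Longrightarrow> rho i y = x"
    using assms(3-6) by auto
  interpret rank2_root_set "C x" "R x \<union> R y"
    using assms(7) rho_x rho_y by (rule root_system_rank2_root_set)
  have "standard_scheme {1, 2} {x, y} C"
    using cartan_scheme_eq_if_all_rho_eq[OF assms(2) _ rho_x] by (auto simp: standard_scheme_def)
  moreover have "finite_root_system {x, y} R \<longleftrightarrow> finite (R x \<union> R y)"
    by (simp add: finite_root_system_def)
  ultimately show ?thesis
    using finite_iff_finite_type by simp
qed

end
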